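(* Let $(\mathcal{E},\mathcal{L},\mathcal{B})$ be a normal labelled space and $R$ a unital commutative ring. In $L_R(\mathcal{E},\mathcal{L},\mathcal{B})$: (i) if $A\in\mathcal{B}$ is non-empty then $p_A\neq 0$; (ii) if $r\in R$, $A\in\mathcal{B}$ and $rp_A=0$, then $r=0$ or $A=\emptyset$; (iii) if $A_1,\dots,A_n\in\mathcal{B}$ are non-empty and pairwise disjoint, $r_1,\dots,r_n\in R$ and $\sum_i r_ip_{A_i}=0$, then $r_i=0$ for all $i$; (iv) if $\alpha,\beta\in\mathcal{L}^*(\mathcal{E})$, $A\in\mathcal{B}$ with $A\cap r(\alpha)\cap r(\beta)\neq\emptyset$, and $0\neq r\in R$, then $rs_\alpha p_A s_\beta^*\neq 0$.
   Context: A graph $\mathcal{E}=(\mathcal{E}^0,\mathcal{E}^1,r,s)$ consists of a set of vertices $\mathcal{E}^0$, a set of edges $\mathcal{E}^1$ and maps $r,s:\mathcal{E}^1\to\mathcal{E}^0$. A finite path is a sequence $\lambda=\lambda_1\cdots\lambda_n$ of edges with $r(\lambda_i)=s(\lambda_{i+1})$, with $s(\lambda)=s(\lambda_1)$, $r(\lambda)=r(\lambda_n)$. A labelled graph $(\mathcal{E},\mathcal{L})$ is a graph with a surjective map $\mathcal{L}:\mathcal{E}^1\to\mathcal{A}$ onto a set $\mathcal{A}$ (the alphabet), extended to paths by $\mathcal{L}(\lambda)=\mathcal{L}(\lambda_1)\cdots\mathcal{L}(\lambda_n)$. $\mathcal{L}^*(\mathcal{E})$ denotes the set of words $\mathcal{L}(\lambda)$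 for finite paths $\lambda$ of positive length, together with the empty word $\omega$; $|\alpha|$ is the length of a word. For $A\subseteq\mathcal{E}^0$ and $\alpha\in\mathcal{L}^*(\mathcal{E})$, $r(A,\alpha)=\{r(\lambda)\mid \mathcal{L}(\lambda)=\alpha,\ s(\lambda)\in A\}$ if $\alpha\neq\omega$ and $r(A,\omega)=A$; $r(\alpha)=r(\mathcal{E}^0,\alpha)$; $\mathcal{L}(A\mathcal{E}^1)=\{a\in\mathcal{A}\mid r(A,a)\neq\emptyset\}$. A labelled space $(\mathcal{E},\mathcal{L},\mathcal{B})$ is a labelled graph with a family $\mathcal{B}$ of subsets of $\mathcal{E}^0$ closed under finite intersections and finite unions, containing $r(\alpha)$ for all non-empty $\alpha\in\mathcal{L}^*(\mathcal{E})$, and with $r(A,\alpha)\in\mathcal{B}$ for all $A\in\mathcal{B}$, $\alpha\in\mathcal{L}^*(\mathcal{E})$. It is normal if additionally $r(A\cap B,\alpha)=r(A,\alpha)\cap r(B,\alpha)$ for all $A,B\in\mathcal{B}$ and non-empty $\alpha$, and $\mathcal{B}$ is closed under relative complements. A non-empty $A\in\mathcal{B}$ is regular if $0<|\mathcal{L}(B\mathcal{E}^1)|<\infty$ for every non-empty $B\in\mathcal{B}$ with $B\subseteq A$; $\mathcal{B}_{reg}$ is the set of regular sets together with $\emptyset$. For $\alpha\in\mathcal{L}^*(\mathcal{E})$, $\mathcal{B}_\alpha=\{A\in\mathcal{B}\mid A\subseteq r(\alpha)\}$. The Leavitt labelled path algebra $L_R(\mathcal{E},\mathcal{L},\mathcal{B})$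 (for a normal labelled space and a unital commutative ring $R$) is the universal $R$-algebra generated by $\{p_A\mid A\in\mathcal{B}\}\cup\{s_a,s_a^*\mid a\in\mathcal{A}\}$ subject to: (i) $p_{A\cap B}=p_Ap_B$, $p_{A\cup B}=p_A+p_B-p_{A\cap B}$, $p_\emptyset=0$; (ii) $p_As_a=s_ap_{r(A,a)}$ and $s_a^*p_A=p_{r(A,a)}s_a^*$; (iii) $s_a^*s_a=p_{r(a)}$ and $s_b^*s_a=0$ for $b\neq a$; (iv) $s_as_a^*s_a=s_a$, $s_a^*s_as_a^*=s_a^*$; (v) $p_A=\sum_{a\in\mathcal{L}(A\mathcal{E}^1)}s_ap_{r(A,a)}s_a^*$ for every $A\in\mathcal{B}_{reg}$. For $\alpha=a_1\cdots a_n$ put $s_\alpha=s_{a_1}\cdots s_{a_n}$, $s_\alpha^*=s_{a_n}^*\cdots s_{a_1}^*$, and by convention $s_\omega p_A s_\omega^*=p_A$, $s_\omega p_A s_\beta^*=p_As_\beta^*$, etc. *)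

theory Defs
  imports Main
begin

record ('v, 'e, 'a) lspace =
  verts :: "'v set"
  edges :: "'e set"
  src   :: "'e \<Rightarrow> 'v"
  rng   :: "'e \<Rightarrow> 'v"
  lab   :: "'e \<Rightarrow> 'a"
  accs  :: "'v set set"

definition alphabet :: "('v, 'e, 'a) lspace \<Rightarrow> 'a set" where
  "alphabet G = lab G ` edges G"

definition is_path :: "('v, 'e, 'a) lspace \<Rightarrow> 'e list \<Rightarrow> bool" where
  "is_path G p \<longleftrightarrow> p \<noteq> [] \<and> set p \<subseteq> edges G \<and>
     (\<forall>i. Suc i < length p \<longrightarrow> rng G (p ! i) = src G (p ! Suc i))"

definition words :: "('v, 'e, 'a) lspace \<Rightarrow> 'a list set" where
  "words G = insert [] {map (lab G) p | p. is_path G p}"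

definition rset :: "('v, 'e, 'a) lspace \<Rightarrow> 'v set \<Rightarrow> 'a list \<Rightarrow> 'v set" where
  "rset G A w = (if w = [] then A
     else {rng G (last p) | p. is_path G p \<and> map (lab G) p = w \<and> src G (hd p) \<in> A})"

definition rw :: "('v, 'e, 'a) lspace \<Rightarrow> 'a list \<Rightarrow> 'v set" where
  "rw G w = rset G (verts G) w"

definition labout :: "('v, 'e, 'a) lspace \<Rightarrow> 'v set \<Rightarrow> 'a set" where
  "labout G A = {a \<in> alphabet G. rset G A [a] \<noteq> {}}"

definition labelled_space :: "('v, 'e, 'a) lspace \<Rightarrow> bool" where
  "labelled_space G \<longleftrightarrow>
     (\<forall>e \<in> edges G. src G e \<in> verts G \<and> rng G e \<in> verts G) \<and>
     accs G \<subseteq> Pow (verts G) \<and>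
     (\<forall>A \<in> accs G. \<forall>B \<in> accs G. A \<inter> B \<in> accs G \<and> A \<union> B \<in> accs G) \<and>
     (\<forall>w \<in> words G. w \<noteq> [] \<longrightarrow> rw G w \<in> accs G) \<and>
     (\<forall>A \<in> accs G. \<forall>w \<in> words G. rset G A w \<in> accs G)"

definition normal_lspace :: "('v, 'e, 'a) lspace \<Rightarrow> bool" where
  "normal_lspace G \<longleftrightarrow> labelled_space G \<and>
     (\<forall>A \<in> accs G. \<forall>B \<in> accs G. \<forall>w \<in> words G. w \<noteq> [] \<longrightarrow>
        rset G (A \<inter> B) w = rset G A w \<inter> rset G B w) \<and>
     (\<forall>A \<in> accs G. \<forall>B \<in> accs G. A - B \<in> accs G)"

definition regular :: "('v, 'e, 'a) lspace \<Rightarrow> 'v set \<Rightarrow> bool" where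
  "regular G A \<longleftrightarrow> A \<in> accs G \<and> A \<noteq> {} \<and>
     (\<forall>B \<in> accs G. B \<noteq> {} \<and> B \<subseteq> A \<longrightarrow>
        finite (labout G B) \<and> 0 < card (labout G B))"

definition Breg :: "('v, 'e, 'a) lspace \<Rightarrow> 'v set set" where
  "Breg G = insert {} {A. regular G A}"

text \<open>Free (noncommutative polynomial) R-algebra on the generators p_A, s_a, s_a^*.
  Elements are functions from words in the generators to coefficients; the ideal below
  is generated inside the finitely supported ones.\<close>

datatype ('v, 'a) gen = GP "'v set" | GS 'a | GSt 'a

type_synonym ('v, 'a, 'r) fa = "('v, 'a) gen list \<Rightarrow> 'r"

definition fa_zero :: "('v, 'a, 'r::comm_ring_1) fa" where
  "fa_zero = (\<lambda>w. 0)"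

definition fa_add :: "('v, 'a, 'r::comm_ring_1) fa \<Rightarrow> ('v, 'a, 'r) fa \<Rightarrow> ('v, 'a, 'r) fa" where
  "fa_add f g = (\<lambda>w. f w + g w)"

definition fa_sub :: "('v, 'a, 'r::comm_ring_1) fa \<Rightarrow> ('v, 'a, 'r) fa \<Rightarrow> ('v, 'a, 'r) fa" where
  "fa_sub f g = (\<lambda>w. f w - g w)"

definition fa_smult :: "'r::comm_ring_1 \<Rightarrow> ('v, 'a, 'r) fa \<Rightarrow> ('v, 'a, 'r) fa" where
  "fa_smult c f = (\<lambda>w. c * f w)"

definition fa_mult :: "('v, 'a, 'r::comm_ring_1) fa \<Rightarrow> ('v, 'a, 'r) fa \<Rightarrow> ('v, 'a, 'r) fa" where
  "fa_mult f g = (\<lambda>w. \<Sum>i\<in>{..length w}. f (take i w) * g (drop i w))"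

definition fa_sum :: "('i \<Rightarrow> ('v, 'a, 'r::comm_ring_1) fa) \<Rightarrow> 'i set \<Rightarrow> ('v, 'a, 'r) fa" where
  "fa_sum F I = (\<lambda>w. \<Sum>i\<in>I. F i w)"

definition mono :: "'r::comm_ring_1 \<Rightarrow> ('v, 'a) gen list \<Rightarrow> ('v, 'a, 'r) fa" where
  "mono c u = (\<lambda>w. if w = u then c else 0)"

definition pA :: "'v set \<Rightarrow> ('v, 'a, 'r::comm_ring_1) fa" where
  "pA A = mono 1 [GP A]"

definition sa :: "'a \<Rightarrow> ('v, 'a, 'r::comm_ring_1) fa" where
  "sa a = mono 1 [GS a]"

definition sast :: "'a \<Rightarrow> ('v, 'a, 'r::comm_ring_1) fa" where
  "sast a = mono 1 [GSt a]"

text \<open>s_alpha and s_alpha^*; for the empty word both are the unit.\<close>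
definition sw :: "'a list \<Rightarrow> ('v, 'a, 'r::comm_ring_1) fa" where
  "sw w = mono 1 (map GS w)"

definition swst :: "'a list \<Rightarrow> ('v, 'a, 'r::comm_ring_1) fa" where
  "swst w = mono 1 (rev (map GSt w))"

definition rels :: "('v, 'e, 'a) lspace \<Rightarrow> ('v, 'a, 'r::comm_ring_1) fa set" where
  "rels G =
     {fa_sub (pA (A \<inter> B)) (fa_mult (pA A) (pA B)) | A B. A \<in> accs G \<and> B \<in> accs G} \<union>
     {fa_sub (pA (A \<union> B)) (fa_sub (fa_add (pA A) (pA B)) (pA (A \<inter> B))) | A B.
        A \<in> accs G \<and> B \<in> accs G} \<union>
     {pA {} | _::unit. {} \<in> accs G} \<union>
     {fa_sub (fa_mult (pA A) (sa a)) (fa_mult (sa a) (pA (rset G A [a]))) | A a.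
        A \<in> accs G \<and> a \<in> alphabet G} \<union>
     {fa_sub (fa_mult (sast a) (pA A)) (fa_mult (pA (rset G A [a])) (sast a)) | A a.
        A \<in> accs G \<and> a \<in> alphabet G} \<union>
     {fa_sub (fa_mult (sast a) (sa a)) (pA (rw G [a])) | a. a \<in> alphabet G} \<union>
     {fa_mult (sast b) (sa a) | a b. a \<in> alphabet G \<and> b \<in> alphabet G \<and> b \<noteq> a} \<union>
     {fa_sub (fa_mult (fa_mult (sa a) (sast a)) (sa a)) (sa a) | a. a \<in> alphabet G} \<union>
     {fa_sub (fa_mult (fa_mult (sast a) (sa a)) (sast a)) (sast a) | a. a \<in> alphabet G} \<union>
     {fa_sub (pA A) (fa_sum (\<lambda>a. fa_mult (fa_mult (sa a) (pA (rset G A [a]))) (sast a))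
                             (labout G A)) | A. A \<in> Breg G \<and> A \<in> accs G}"

inductive_set lideal :: "('v, 'e, 'a) lspace \<Rightarrow> ('v, 'a, 'r::comm_ring_1) fa set"
  for G :: "('v, 'e, 'a) lspace" where
  base: "x \<in> rels G \<Longrightarrow> x \<in> lideal G"
| zero: "fa_zero \<in> lideal G"
| add: "x \<in> lideal G \<Longrightarrow> y \<in> lideal G \<Longrightarrow> fa_add x y \<in> lideal G"
| mult: "x \<in> lideal G \<Longrightarrow> fa_mult (fa_mult (mono c u) x) (mono 1 v) \<in> lideal G"

definition zero_in_L :: "('v, 'e, 'a) lspace \<Rightarrow> ('v, 'a, 'r::comm_ring_1) fa \<Rightarrow> bool" where
  "zero_in_L G x \<longleftrightarrow> x \<in> lideal G"

end

(*
  The algebra is represented by partial maps on a set of states. A state is a finite or infinite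
  chain F_0, F_1, ... of prime filters of accessible sets joined by labels a_n, with
  F_n = {A. r(A, a_n) in F_(n+1)} and r(a_n) in F_(n+1); a finite chain must end in a filter
  without regular members. The generator p_A keeps the states with A in F_0, s_a prepends the
  label a and s_a^* removes a leading a. These partial maps satisfy all defining relations (for
  relation (v) because a state whose head filter contains a regular set has a next label), so
  every element of the defining ideal has vanishing matrix coefficients between states.

  Conversely, every prime filter is the head of a state. Nonempty accessible sets lie in prime
  filters by Zorn's lemma, and a prime filter F with a regular member has a predecessor along
  some label a: choose a with r(A, a) nonempty for all A in F, extend {r(A, a) | A in F} to a
  prime filter F', and use relative complements (which make prime filters maximal) to identify
  F with the pullback of F'. Evaluating at suitable states gives a nonzero coefficient for each
  of the elements in (i)-(iv).
*)

theory Submission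
  imports Defs "HOL-Library.Extended_Nat"
begin

lemma is_path_single [simp]: "is_path G [e] \<longleftrightarrow> e \<in> edges G"
  by (simp add: is_path_def)

lemma is_path_Cons:
  assumes "p \<noteq> []"
  shows "is_path G (e # p) \<longleftrightarrow> e \<in> edges G \<and> rng G e = src G (hd p) \<and> is_path G p"
  using assms unfolding is_path_def
  by (auto simp: hd_conv_nth less_Suc_eq_0_disj nth_Cons split: nat.splits)

lemma rset_Nil [simp]: "rset G A [] = A"
  by (simp add: rset_def)

lemma rset_mono: "A \<subseteq> B \<Longrightarrow> rset G A w \<subseteq> rset G B w"
  unfolding rset_def by auto

lemma rset_empty [simp]: "rset G {} w = {}"
  unfolding rset_def by auto

lemma rset_Un: "rset G (A \<union> B) w = rset G A w \<union> rset G B w"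
  unfolding rset_def by auto

lemma rset_single: "rset G A [a] = {rng G e | e. e \<in> edges G \<and> lab G e = a \<and> src G e \<in> A}"
  unfolding rset_def by (auto simp: map_eq_Cons_conv) (metis is_path_single last.simps list.sel(1))

lemma rset_Cons:
  assumes "w \<noteq> []"
  shows "rset G A (a # w) = rset G (rset G A [a]) w"
proof (intro equalityI subsetI)
  fix v assume "v \<in> rset G A (a # w)"
  then have "\<exists>p. v = rng G (last p) \<and> is_path G p \<and> map (lab G) p = a # w \<and> src G (hd p) \<in> A"
    unfolding rset_def by (simp only: list.distinct if_False mem_Collect_eq)
  then obtain p where p: "v = rng G (last p)" "is_path G p" "map (lab G) p = a # w" "src G (hd p) \<in> A"
    by (elim exE conjE)
  then obtain e q where "p = e # q" "lab G e = a" "map (lab G) q = w"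
    by (auto simp: map_eq_Cons_conv)
  moreover have "q \<noteq> []" using calculation(3) assms by auto
  ultimately have "is_path G q" "src G (hd q) \<in> rset G A [a]"
    using p by (auto simp: is_path_Cons rset_single intro!: exI[of _ e])
  then show "v \<in> rset G (rset G A [a]) w"
    using assms p \<open>p = e # q\<close> \<open>q \<noteq> []\<close> \<open>map (lab G) q = w\<close>
    unfolding rset_def[of G "rset G A [a]"] by (auto intro!: exI[of _ q])
next
  fix v assume "v \<in> rset G (rset G A [a]) w"
  then have "\<exists>q. v = rng G (last q) \<and> is_path G q \<and> map (lab G) q = w \<and> src G (hd q) \<in> rset G A [a]"
    using assms unfolding rset_def[of G "rset G A [a]"] by simp
  then obtain q where q: "v = rng G (last q)" "is_path G q" "map (lab G) q = w"
      "src G (hd q) \<in> rset G A [a]"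
    by (elim exE conjE)
  then obtain e where "src G (hd q) = rng G e" "e \<in> edges G" "lab G e = a" "src G e \<in> A"
    unfolding rset_single by auto
  moreover have "q \<noteq> []" using q(3) assms by auto
  ultimately show "v \<in> rset G A (a # w)"
    using q unfolding rset_def by (auto intro!: exI[of _ "e # q"] simp: is_path_Cons)
qed

lemma singleton_in_words:
  assumes "a \<in> alphabet G"
  shows "[a] \<in> words G"
proof -
  obtain e where "e \<in> edges G" "lab G e = a"
    using assms unfolding alphabet_def by auto
  then show ?thesis
    unfolding words_def by (intro insertI2 CollectI exI[of _ "[e]"]) simp
qed

lemma words_ConsD:
  assumes "a # w \<in> words G" "w \<noteq> []"
  shows "w \<in> words G" "a \<in> alphabet G"
proof -
  obtain e q where "is_path G (e # q)" "lab G e = a" "map (lab G) q = w"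
    using assms(1) unfolding words_def by (auto simp: map_eq_Cons_conv)
  moreover have "q \<noteq> []" using calculation(3) assms(2) by auto
  ultimately show "w \<in> words G" "a \<in> alphabet G"
    unfolding words_def alphabet_def by (auto simp: is_path_Cons)
qed

lemma alphabet_if_rset_single_nonempty: "rset G A [a] \<noteq> {} \<Longrightarrow> a \<in> alphabet G"
  unfolding rset_single alphabet_def by auto

lemma labout_mono: "A \<subseteq> B \<Longrightarrow> labout G A \<subseteq> labout G B"
  unfolding labout_def using rset_mono by blast

section \<open>Filters of accessible sets\<close>

definition filter_on :: "('v, 'e, 'a) lspace \<Rightarrow> 'v set set \<Rightarrow> bool" where
  "filter_on G F \<longleftrightarrow> F \<subseteq> accs G \<and> {} \<notin> F \<and> (\<forall>A\<in>F. \<forall>B\<in>F. A \<inter> B \<in> F) \<and>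
     (\<forall>A\<in>F. \<forall>B\<in>accs G. A \<subseteq> B \<longrightarrow> B \<in> F)"

definition prime_filter_on :: "('v, 'e, 'a) lspace \<Rightarrow> 'v set set \<Rightarrow> bool" where
  "prime_filter_on G F \<longleftrightarrow>
     filter_on G F \<and> (\<forall>A\<in>accs G. \<forall>B\<in>accs G. A \<union> B \<in> F \<longrightarrow> A \<in> F \<or> B \<in> F)"

definition pullback :: "('v, 'e, 'a) lspace \<Rightarrow> 'a \<Rightarrow> 'v set set \<Rightarrow> 'v set set" where
  "pullback G a F = {A \<in> accs G. rset G A [a] \<in> F}"

lemma prime_filter_filter: "prime_filter_on G F \<Longrightarrow> filter_on G F"
  unfolding prime_filter_on_def by simp

lemma filter_upward_closed: "filter_on G F \<Longrightarrow> A \<in> F \<Longrightarrow> B \<in> accs G \<Longrightarrow> A \<subseteq> B \<Longrightarrow> B \<in> F"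
  by (simp add: filter_on_def)

lemma filter_nonempty_member: "filter_on G F \<Longrightarrow> A \<in> F \<Longrightarrow> A \<noteq> {}"
  unfolding filter_on_def by auto

lemma filter_accs: "filter_on G F \<Longrightarrow> A \<in> F \<Longrightarrow> A \<in> accs G"
  unfolding filter_on_def by auto

lemma filter_Int: "filter_on G F \<Longrightarrow> A \<in> F \<Longrightarrow> B \<in> F \<Longrightarrow> A \<inter> B \<in> F"
  unfolding filter_on_def by auto

lemma filter_on_Union_chain:
  assumes "C \<noteq> {}" "\<And>F. F \<in> C \<Longrightarrow> filter_on G F" "chain\<^sub>\<subseteq> C"
  shows "filter_on G (\<Union>C)"
  unfolding filter_on_def
proof (intro conjI ballI impI)
  fix A B assume "A \<in> \<Union>C" "B \<in> \<Union>C"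
  then obtain F1 F2 where "F1 \<in> C" "F2 \<in> C" "A \<in> F1" "B \<in> F2" by blast
  moreover have "F1 \<subseteq> F2 \<or> F2 \<subseteq> F1"
    using assms(3) calculation unfolding chain_subset_def by blast
  ultimately show "A \<inter> B \<in> \<Union>C"
    using assms(2) filter_Int by (metis UnionI subsetD)
next
  fix A B assume "A \<in> \<Union>C" "B \<in> accs G" "A \<subseteq> B"
  then show "B \<in> \<Union>C" using assms(2) filter_upward_closed by (metis UnionE UnionI)
next
  show "\<Union>C \<subseteq> accs G" using assms(2) filter_accs by auto
  show "{} \<notin> \<Union>C" using assms(2) filter_nonempty_member by auto
qed

lemma filter_on_empty: "filter_on G {}"
  unfolding filter_on_def by auto

locale normal_labelled_space =
  fixes G :: "('v, 'e, 'a) lspace"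
  assumes normal: "normal_lspace G"
begin

lemma labelled_space: "labelled_space G"
  using normal unfolding normal_lspace_def by simp

lemma accs_subset_verts: "A \<in> accs G \<Longrightarrow> A \<subseteq> verts G"
  using labelled_space unfolding labelled_space_def by blast

lemma accs_Int: "A \<in> accs G \<Longrightarrow> B \<in> accs G \<Longrightarrow> A \<inter> B \<in> accs G"
  using labelled_space unfolding labelled_space_def by blast

lemma accs_Un: "A \<in> accs G \<Longrightarrow> B \<in> accs G \<Longrightarrow> A \<union> B \<in> accs G"
  using labelled_space unfolding labelled_space_def by blast

lemma accs_Diff: "A \<in> accs G \<Longrightarrow> B \<in> accs G \<Longrightarrow> A - B \<in> accs G"
  using normal unfolding normal_lspace_def by simp

lemma rw_accs: "w \<in> words G \<Longrightarrow> w \<noteq> [] \<Longrightarrow> rw G w \<in> accs G"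
  using labelled_space unfolding labelled_space_def by blast

lemma rset_accs: "A \<in> accs G \<Longrightarrow> w \<in> words G \<Longrightarrow> rset G A w \<in> accs G"
  using labelled_space unfolding labelled_space_def by blast

lemma rset_subset_rw: "A \<in> accs G \<Longrightarrow> rset G A w \<subseteq> rw G w"
  unfolding rw_def using accs_subset_verts rset_mono by blast

lemma rset_single_Int:
  assumes "A \<in> accs G" "B \<in> accs G"
  shows "rset G (A \<inter> B) [a] = rset G A [a] \<inter> rset G B [a]"
proof (cases "a \<in> alphabet G")
  case True
  have "\<forall>A \<in> accs G. \<forall>B \<in> accs G. \<forall>w \<in> words G. w \<noteq> [] \<longrightarrow>
      rset G (A \<inter> B) w = rset G A w \<inter> rset G B w"
    using normal unfolding normal_lspace_def by (elim conjE)
  then show ?thesis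
    using assms singleton_in_words[OF True] by simp
next
  case False
  then have "rset G X [a] = {}" for X
    by (meson alphabet_if_rset_single_nonempty)
  then show ?thesis by simp
qed

lemma prime_filter_Int_iff:
  assumes "prime_filter_on G F" "A \<in> accs G" "B \<in> accs G"
  shows "A \<inter> B \<in> F \<longleftrightarrow> A \<in> F \<and> B \<in> F"
proof -
  have F: "filter_on G F" using assms(1) by (rule prime_filter_filter)
  show ?thesis
    using filter_Int[OF F] filter_upward_closed[OF F] assms(2,3) by (meson Int_lower1 Int_lower2)
qed

lemma prime_filter_Un_iff:
  assumes "prime_filter_on G F" "A \<in> accs G" "B \<in> accs G"
  shows "A \<union> B \<in> F \<longleftrightarrow> A \<in> F \<or> B \<in> F"
proof -
  have F: "filter_on G F" and prime: "A \<union> B \<in> F \<Longrightarrow> A \<in> F \<or> B \<in> F"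
    using assms unfolding prime_filter_on_def by simp_all
  show ?thesis
    using prime filter_upward_closed[OF F] accs_Un[OF assms(2,3)] by (meson Un_upper1 Un_upper2)
qed

lemma filter_on_generated:
  assumes F: "filter_on G F" and C: "C \<in> accs G" and meets: "\<forall>X\<in>F. X \<inter> C \<noteq> {}"
  shows "filter_on G {Y \<in> accs G. \<exists>X\<in>F. X \<inter> C \<subseteq> Y}"
  unfolding filter_on_def
proof (intro conjI ballI impI)
  show "{} \<notin> {Y \<in> accs G. \<exists>X\<in>F. X \<inter> C \<subseteq> Y}"
    using meets by simp
next
  fix Y1 Y2 assume "Y1 \<in> {Y \<in> accs G. \<exists>X\<in>F. X \<inter> C \<subseteq> Y}" "Y2 \<in> {Y \<in> accs G. \<exists>X\<in>F. X \<inter> C \<subseteq> Y}"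
  then obtain X1 X2 where "Y1 \<in> accs G" "Y2 \<in> accs G" "X1 \<in> F" "X2 \<in> F" "X1 \<inter> C \<subseteq> Y1" "X2 \<inter> C \<subseteq> Y2"
    by (elim CollectE conjE bexE)
  moreover have "X1 \<inter> X2 \<in> F" using filter_Int[OF F] calculation by simp
  moreover have "X1 \<inter> X2 \<inter> C \<subseteq> Y1 \<inter> Y2" using calculation by auto
  ultimately show "Y1 \<inter> Y2 \<in> {Y \<in> accs G. \<exists>X\<in>F. X \<inter> C \<subseteq> Y}"
    using accs_Int by auto
next
  fix Y1 Y2 assume "Y1 \<in> {Y \<in> accs G. \<exists>X\<in>F. X \<inter> C \<subseteq> Y}" "Y2 \<in> accs G" "Y1 \<subseteq> Y2"
  then show "Y2 \<in> {Y \<in> accs G. \<exists>X\<in>F. X \<inter> C \<subseteq> Y}" by auto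
qed auto

lemma maximal_filter_is_prime:
  assumes F: "filter_on G F" and maximal: "\<And>F'. filter_on G F' \<Longrightarrow> F \<subseteq> F' \<Longrightarrow> F' = F"
  shows "prime_filter_on G F"
  unfolding prime_filter_on_def
proof (intro conjI F ballI impI)
  fix A B assume AB: "A \<in> accs G" "B \<in> accs G" "A \<union> B \<in> F"
  show "A \<in> F \<or> B \<in> F"
  proof (rule disjCI)
    assume "B \<notin> F"
    have "\<forall>X\<in>F. X \<inter> A \<noteq> {}"
    proof (intro ballI notI)
      fix X assume "X \<in> F" "X \<inter> A = {}"
      then have "X \<inter> (A \<union> B) \<subseteq> B" by blast
      moreover have "X \<inter> (A \<union> B) \<in> F" using filter_Int[OF F \<open>X \<in> F\<close> AB(3)] .
      ultimately show False
        using \<open>B \<notin> F\<close> filter_upward_closed[OF F _ AB(2)] by metis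
    qed
    then have "filter_on G {Y \<in> accs G. \<exists>X\<in>F. X \<inter> A \<subseteq> Y}"
      by (rule filter_on_generated[OF F AB(1)])
    moreover have "F \<subseteq> {Y \<in> accs G. \<exists>X\<in>F. X \<inter> A \<subseteq> Y}"
      using filter_accs[OF F] by auto
    ultimately have "{Y \<in> accs G. \<exists>X\<in>F. X \<inter> A \<subseteq> Y} = F"
      by (rule maximal)
    moreover have "A \<in> {Y \<in> accs G. \<exists>X\<in>F. X \<inter> A \<subseteq> Y}"
      using AB(1,3) by auto
    ultimately show "A \<in> F" by simp
  qed
qed

lemma filter_on_upward_closure:
  assumes "{} \<notin> P" "\<And>A B. A \<in> P \<Longrightarrow> B \<in> P \<Longrightarrow> A \<inter> B \<in> P"
  shows "filter_on G {B \<in> accs G. \<exists>A\<in>P. A \<subseteq> B}"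
  unfolding filter_on_def
proof (intro conjI ballI impI)
  fix X Y assume "X \<in> {B \<in> accs G. \<exists>A\<in>P. A \<subseteq> B}" "Y \<in> {B \<in> accs G. \<exists>A\<in>P. A \<subseteq> B}"
  then obtain A1 A2 where "X \<in> accs G" "Y \<in> accs G" "A1 \<in> P" "A2 \<in> P" "A1 \<subseteq> X" "A2 \<subseteq> Y"
    by (elim CollectE conjE bexE)
  moreover have "A1 \<inter> A2 \<in> P" using assms(2) calculation by simp
  moreover have "A1 \<inter> A2 \<subseteq> X \<inter> Y" using calculation by auto
  ultimately show "X \<inter> Y \<in> {B \<in> accs G. \<exists>A\<in>P. A \<subseteq> B}"
    using accs_Int by auto
qed (use assms(1) in auto)

lemma prime_filter_exists:
  assumes "P \<subseteq> accs G" "{} \<notin> P" "\<And>A B. A \<in> P \<Longrightarrow> B \<in> P \<Longrightarrow> A \<inter> B \<in> P"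
  obtains F where "prime_filter_on G F" "P \<subseteq> F"
proof -
  define Fs where "Fs = {F. filter_on G F \<and> P \<subseteq> F}"
  have "\<forall>C\<in>chains Fs. \<exists>U\<in>Fs. \<forall>X\<in>C. X \<subseteq> U"
  proof
    fix C assume C: "C \<in> chains Fs"
    show "\<exists>U\<in>Fs. \<forall>X\<in>C. X \<subseteq> U"
    proof (cases "C = {}")
      case True
      have "{B \<in> accs G. \<exists>A\<in>P. A \<subseteq> B} \<in> Fs"
        using filter_on_upward_closure[OF assms(2,3)] assms(1) unfolding Fs_def by auto
      then show ?thesis using True by auto
    next
      case False
      have "\<Union>C \<in> Fs"
        using C filter_on_Union_chain[OF False] False unfolding Fs_def chains_def by auto
      then show ?thesis by auto
    qed
  qed
  then obtain M where M: "M \<in> Fs" "\<forall>F\<in>Fs. M \<subseteq> F \<longrightarrow> F = M"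
    by (auto dest: Zorn_Lemma2)
  have "prime_filter_on G M"
    using M unfolding Fs_def by (intro maximal_filter_is_prime) auto
  then show ?thesis using M(1) that unfolding Fs_def by auto
qed

lemma pullback_eq_empty:
  assumes "filter_on G F" "a \<notin> alphabet G"
  shows "pullback G a F = {}"
proof -
  have "rset G A [a] \<notin> F" for A
    using assms filter_nonempty_member alphabet_if_rset_single_nonempty by metis
  then show ?thesis
    unfolding pullback_def by simp
qed

lemma filter_on_pullback:
  assumes F: "filter_on G F"
  shows "filter_on G (pullback G a F)"
proof (cases "a \<in> alphabet G")
  case True
  note a = singleton_in_words[OF True]
  show ?thesis
    unfolding filter_on_def pullback_def
  proof (intro conjI ballI impI)
    fix A B assume "A \<in> {A \<in> accs G. rset G A [a] \<in> F}" "B \<in> {A \<in> accs G. rset G A [a] \<in> F}"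
    then show "A \<inter> B \<in> {A \<in> accs G. rset G A [a] \<in> F}"
      using rset_single_Int accs_Int filter_Int[OF F] by simp
  next
    fix A B assume "A \<in> {A \<in> accs G. rset G A [a] \<in> F}" "B \<in> accs G" "A \<subseteq> B"
    then show "B \<in> {A \<in> accs G. rset G A [a] \<in> F}"
      using filter_upward_closed[OF F] rset_mono rset_accs[OF _ a] by (metis (mono_tags, lifting) mem_Collect_eq)
  qed (use filter_nonempty_member[OF F] in auto)
next
  case False
  then show ?thesis
    using pullback_eq_empty[OF F] filter_on_empty by metis
qed

lemma prime_filter_pullback:
  assumes F: "prime_filter_on G F"
  shows "prime_filter_on G (pullback G a F)"
proof -
  have filter: "filter_on G F" using F by (rule prime_filter_filter)
  have "A \<in> pullback G a F \<or> B \<in> pullback G a F"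
    if "A \<in> accs G" "B \<in> accs G" "A \<union> B \<in> pullback G a F" for A B
  proof -
    have "a \<in> alphabet G"
      using that pullback_eq_empty[OF filter] by (metis empty_iff)
    then have "rset G A [a] \<in> accs G" "rset G B [a] \<in> accs G"
      using rset_accs[OF _ singleton_in_words] that(1,2) by blast+
    then show ?thesis
      using that prime_filter_Un_iff[OF F] unfolding pullback_def by (auto simp: rset_Un)
  qed
  then show ?thesis
    unfolding prime_filter_on_def using filter_on_pullback[OF filter] by blast
qed

text \<open>Relative complements make the accessible sets a Boolean ring, in which prime filters are
  maximal.\<close>
lemma prime_filter_eq_if_subset:
  assumes F: "prime_filter_on G F" "F \<noteq> {}" and F': "filter_on G F'" "F \<subseteq> F'"
  shows "F' = F"
proof
  have filter: "filter_on G F" using F(1) by (rule prime_filter_filter)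
  obtain X where X: "X \<in> F" using F(2) by blast
  show "F' \<subseteq> F"
  proof
    fix A assume A: "A \<in> F'"
    have "A \<in> accs G" "X \<in> accs G" using filter_accs F' A filter X by auto
    moreover have "X = (X \<inter> A) \<union> (X - A)" by blast
    ultimately have "X \<inter> A \<in> F \<or> X - A \<in> F"
      using prime_filter_Un_iff[OF F(1) accs_Int accs_Diff] X by metis
    moreover have "X - A \<notin> F"
    proof
      assume "X - A \<in> F"
      then have "(X - A) \<inter> A \<in> F'" using filter_Int[OF F'(1) _ A] F'(2) by blast
      then show False using filter_nonempty_member[OF F'(1)] by auto
    qed
    ultimately show "A \<in> F"
      using filter_upward_closed[OF filter] \<open>A \<in> accs G\<close> by blast
  qed
qed (rule F'(2))

text \<open>Minimising the number of labels leaving \<open>A \<inter> R\<close> over the members \<open>A\<close> of the filter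
  yields a label that every member emits.\<close>
lemma filter_common_label:
  assumes F: "filter_on G F" and R: "R \<in> F" "regular G R"
  obtains a where "\<And>A. A \<in> F \<Longrightarrow> rset G A [a] \<noteq> {}"
proof -
  define S where "S A = labout G (A \<inter> R)" for A
  have S_finite: "finite (S A) \<and> 0 < card (S A)" if "A \<in> F" for A
  proof -
    have "A \<inter> R \<in> F" using filter_Int[OF F that R(1)] .
    then show ?thesis
      using R(2) filter_accs[OF F] filter_nonempty_member[OF F] unfolding regular_def S_def by auto
  qed
  obtain A0 where A0: "A0 \<in> F" and least: "\<And>A. A \<in> F \<Longrightarrow> card (S A0) \<le> card (S A)"
    using ex_has_least_nat[of "\<lambda>A. A \<in> F" R "\<lambda>A. card (S A)"] R(1) by blast
  obtain a where a: "a \<in> S A0"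
    using S_finite[OF A0] by (metis card_gt_0_iff ex_in_conv)
  have "rset G A [a] \<noteq> {}" if A: "A \<in> F" for A
  proof -
    have AA0: "A \<inter> A0 \<in> F" using filter_Int[OF F A A0] .
    have "S (A \<inter> A0) \<subseteq> S A0"
      unfolding S_def by (rule labout_mono) auto
    then have "S (A \<inter> A0) = S A0"
      using card_seteq S_finite[OF A0] least[OF AA0] by blast
    then have "rset G (A \<inter> A0 \<inter> R) [a] \<noteq> {}"
      using a unfolding S_def labout_def by auto
    moreover have "rset G (A \<inter> A0 \<inter> R) [a] \<subseteq> rset G A [a]"
      by (rule rset_mono) auto
    ultimately show ?thesis by auto
  qed
  then show ?thesis using that by blast
qed

lemma prime_filter_predecessor:
  assumes F: "prime_filter_on G F" and R: "R \<in> F" "regular G R"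
  obtains a F' where "prime_filter_on G F'" "F = pullback G a F'" "rw G [a] \<in> F'"
proof -
  have filter: "filter_on G F" using F by (rule prime_filter_filter)
  obtain a where a: "\<And>A. A \<in> F \<Longrightarrow> rset G A [a] \<noteq> {}"
    using filter_common_label[OF filter R] by blast
  have "a \<in> alphabet G"
    using alphabet_if_rset_single_nonempty[OF a[OF R(1)]] .
  then have images: "(\<lambda>A. rset G A [a]) ` F \<subseteq> accs G"
    using rset_accs[OF _ singleton_in_words] filter_accs[OF filter] by blast
  have "rset G A [a] \<inter> rset G B [a] \<in> (\<lambda>A. rset G A [a]) ` F" if "A \<in> F" "B \<in> F" for A B
    using filter_Int[OF filter that] rset_single_Int filter_accs[OF filter] that by (metis image_eqI)
  then obtain F' where F': "prime_filter_on G F'" "(\<lambda>A. rset G A [a]) ` F \<subseteq> F'"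
    using prime_filter_exists[OF images] a by blast
  have "F \<subseteq> pullback G a F'"
    using F'(2) filter_accs[OF filter] unfolding pullback_def by blast
  then have "pullback G a F' = F"
    using prime_filter_eq_if_subset[OF F _ filter_on_pullback] F'(1) R(1)
    unfolding prime_filter_on_def by blast
  moreover have "rw G [a] \<in> F'"
  proof -
    have "rset G R [a] \<in> F'" using F'(2) R(1) by blast
    moreover have "rset G R [a] \<subseteq> rw G [a]" using rset_subset_rw filter_accs[OF filter R(1)] .
    ultimately show ?thesis
      using F'(1) rw_accs[OF singleton_in_words[OF \<open>a \<in> alphabet G\<close>]] filter_upward_closed
      unfolding prime_filter_on_def by blast
  qed
  ultimately show ?thesis using that F'(1) by blast
qed

end

section \<open>States\<close>

lemma all_le_eSuc: "(\<forall>n. enat n \<le> eSuc L \<longrightarrow> Q n) \<longleftrightarrow> Q 0 \<and> (\<forall>n. enat n \<le> L \<longrightarrow> Q (Suc n))"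
  by (metis eSuc_enat eSuc_ile_mono not0_implies_Suc zero_enat_def zero_le)

lemma all_less_eSuc: "(\<forall>n. enat n < eSuc L \<longrightarrow> Q n) \<longleftrightarrow> Q 0 \<and> (\<forall>n. enat n < L \<longrightarrow> Q (Suc n))"
  by (metis eSuc_enat eSuc_mono not0_implies_Suc zero_enat_def i0_iless_eSuc)

lemma all_eSuc_eq_enat: "(\<forall>m. eSuc L = enat m \<longrightarrow> Q m) \<longleftrightarrow> (\<forall>m. L = enat m \<longrightarrow> Q (Suc m))"
  by (auto simp: eSuc_enat_iff)

lemma eSuc_minus_1_pos: "0 < L \<Longrightarrow> eSuc (L - 1) = L"
  by (cases L) (auto simp: eSuc_enat one_enat_def zero_enat_def)

text \<open>A state \<open>State L w F\<close> is a chain of filters \<open>F 0, F 1, \<dots>\<close> of length \<open>L\<close>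
  (possibly infinite), where the label \<open>w n\<close> leads from \<open>F (Suc n)\<close> back to \<open>F n\<close>.\<close>
datatype ('a, 'v) state = State (slen: enat) (slabel: "nat \<Rightarrow> 'a") (sfilter: "nat \<Rightarrow> 'v set set")

definition state_cons :: "'a \<Rightarrow> 'v set set \<Rightarrow> ('a, 'v) state \<Rightarrow> ('a, 'v) state" where
  "state_cons a F x = State (eSuc (slen x)) (case_nat a (slabel x)) (case_nat F (sfilter x))"

definition state_tail :: "('a, 'v) state \<Rightarrow> ('a, 'v) state" where
  "state_tail x = State (slen x - 1) (slabel x \<circ> Suc) (sfilter x \<circ> Suc)"

lemma state_cons_sel [simp]:
  "slen (state_cons a F x) = eSuc (slen x)" "slabel (state_cons a F x) 0 = a"
  "sfilter (state_cons a F x) 0 = F"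
  by (simp_all add: state_cons_def)

lemma state_tail_cons [simp]: "state_tail (state_cons a F x) = x"
  unfolding state_tail_def state_cons_def by (cases x) (simp add: comp_def)

lemma state_cons_tail: "0 < slen x \<Longrightarrow> state_cons (slabel x 0) (sfilter x 0) (state_tail x) = x"
  unfolding state_tail_def state_cons_def
  by (cases x) (auto simp: eSuc_minus_1_pos fun_eq_iff split: nat.split)

definition admissible :: "('v, 'e, 'a) lspace \<Rightarrow> ('a, 'v) state \<Rightarrow> bool" where
  "admissible G x \<longleftrightarrow>
     (\<forall>n. enat n \<le> slen x \<longrightarrow> prime_filter_on G (sfilter x n)) \<and>
     (\<forall>n. enat n < slen x \<longrightarrow> sfilter x n = pullback G (slabel x n) (sfilter x (Suc n)) \<and>
        rw G [slabel x n] \<in> sfilter x (Suc n)) \<and>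
     (\<forall>m. slen x = enat m \<longrightarrow> (\<forall>A\<in>sfilter x m. \<not> regular G A))"

lemma admissible_state_cons_iff:
  "admissible G (state_cons a F x) \<longleftrightarrow>
     admissible G x \<and> prime_filter_on G F \<and> F = pullback G a (sfilter x 0) \<and> rw G [a] \<in> sfilter x 0"
  unfolding admissible_def state_cons_def state.sel all_le_eSuc all_less_eSuc all_eSuc_eq_enat
  by auto

lemma admissible_head_filter: "admissible G x \<Longrightarrow> prime_filter_on G (sfilter x 0)"
  unfolding admissible_def by (simp add: zero_enat_def[symmetric])

lemma admissible_head_step:
  "admissible G x \<Longrightarrow> 0 < slen x \<Longrightarrow>
     sfilter x 0 = pullback G (slabel x 0) (sfilter x 1) \<and> rw G [slabel x 0] \<in> sfilter x 1"
  unfolding admissible_def by (simp add: zero_enat_def[symmetric])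

lemma admissible_tail: "admissible G x \<Longrightarrow> 0 < slen x \<Longrightarrow> admissible G (state_tail x)"
  using admissible_state_cons_iff state_cons_tail by metis

fun gen_act :: "('v, 'e, 'a) lspace \<Rightarrow> ('v, 'a) gen \<Rightarrow> ('a, 'v) state \<Rightarrow> ('a, 'v) state option" where
  "gen_act G (GP A) x = (if A \<in> sfilter x 0 then Some x else None)"
| "gen_act G (GS a) x =
     (if rw G [a] \<in> sfilter x 0 then Some (state_cons a (pullback G a (sfilter x 0)) x) else None)"
| "gen_act G (GSt a) x = (if 0 < slen x \<and> slabel x 0 = a then Some (state_tail x) else None)"

fun word_act :: "('v, 'e, 'a) lspace \<Rightarrow> ('v, 'a) gen list \<Rightarrow> ('a, 'v) state \<Rightarrow> ('a, 'v) state option" where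
  "word_act G [] x = Some x"
| "word_act G (g # u) x = Option.bind (word_act G u x) (gen_act G g)"

lemma word_act_append: "word_act G (u @ v) x = Option.bind (word_act G v x) (word_act G u)"
  by (induction u) (auto split: Option.bind_split)

lemma gen_act_GS_GSt: "gen_act G (GS a) x = Some y \<Longrightarrow> gen_act G (GSt a) y = Some x"
  by (auto split: if_splits)

lemma word_act_map_GSt:
  "word_act G (map GS \<beta>) z = Some x \<Longrightarrow> word_act G (rev (map GSt \<beta>)) x = Some z"
proof (induction \<beta> arbitrary: x)
  case (Cons b \<beta>)
  then obtain y where "word_act G (map GS \<beta>) z = Some y" "gen_act G (GS b) y = Some x"
    by (auto split: Option.bind_splits)
  then show ?case
    using Cons.IH gen_act_GS_GSt[of G b y x] by (simp add: word_act_append del: gen_act.simps)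
qed simp

lemma gen_act_GSt_GS:
  assumes "admissible G x" "gen_act G (GSt a) x = Some y"
  shows "gen_act G (GS a) y = Some x"
proof -
  have pos: "0 < slen x" and a: "slabel x 0 = a" and y: "y = state_tail x"
    using assms(2) by (auto split: if_splits)
  show ?thesis
    using admissible_head_step[OF assms(1) pos] state_cons_tail[OF pos] a y
    by (simp add: state_tail_def)
qed

context normal_labelled_space
begin

lemma rw_Cons_subset:
  assumes "w \<noteq> []"
  shows "rw G (a # w) \<subseteq> rw G w"
proof -
  have "rset G (verts G) [a] \<subseteq> verts G"
    using labelled_space unfolding labelled_space_def rset_single by auto
  then show ?thesis
    unfolding rw_def rset_Cons[OF assms] by (rule rset_mono)
qed

lemma word_act_map_GS:
  assumes F: "prime_filter_on G (sfilter z 0)"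
    and "\<alpha> \<in> words G" "\<alpha> \<noteq> []" "rw G \<alpha> \<in> sfilter z 0"
  shows "\<exists>y. word_act G (map GS \<alpha>) z = Some y \<and> sfilter y 0 = {B \<in> accs G. rset G B \<alpha> \<in> sfilter z 0}"
  using assms(2-)
proof (induction \<alpha>)
  case (Cons a \<alpha>)
  show ?case
  proof (cases "\<alpha> = []")
    case True
    then show ?thesis using Cons.prems by (simp add: pullback_def)
  next
    case False
    have \<alpha>: "\<alpha> \<in> words G" and a: "[a] \<in> words G"
      using words_ConsD[OF Cons.prems(1) False] singleton_in_words by auto
    have "rw G \<alpha> \<in> sfilter z 0"
      using Cons.prems(3) rw_Cons_subset[OF False] rw_accs[OF \<alpha> False] F filter_upward_closed
      unfolding prime_filter_on_def by blast
    then obtain y where y: "word_act G (map GS \<alpha>) z = Some y"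
        "sfilter y 0 = {B \<in> accs G. rset G B \<alpha> \<in> sfilter z 0}"
      using Cons.IH[OF \<alpha> False] by blast
    have rset_Cons': "rset G (rset G B [a]) \<alpha> = rset G B (a # \<alpha>)" for B
      by (rule rset_Cons[OF False, symmetric])
    have "rw G [a] \<in> sfilter y 0"
      using y(2) Cons.prems(3) rw_accs[OF a] rset_Cons'[of "verts G"] unfolding rw_def by simp
    moreover have "pullback G a (sfilter y 0) = {B \<in> accs G. rset G B (a # \<alpha>) \<in> sfilter z 0}"
      unfolding y(2) pullback_def using rset_accs[OF _ a] rset_Cons' by auto
    ultimately show ?thesis using y(1) by simp
  qed
qed simp

lemma admissible_gen_act: "admissible G x \<Longrightarrow> gen_act G g x = Some y \<Longrightarrow> admissible G y"
proof (cases g)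
  case (GS a)
  assume "admissible G x" "gen_act G g x = Some y"
  then show ?thesis
    using GS prime_filter_pullback[OF admissible_head_filter[OF \<open>admissible G x\<close>]]
    by (auto simp: admissible_state_cons_iff split: if_splits)
qed (auto intro: admissible_tail split: if_splits)

lemma admissible_word_act: "admissible G x \<Longrightarrow> word_act G u x = Some y \<Longrightarrow> admissible G y"
  by (induction u arbitrary: y) (auto intro: admissible_gen_act split: Option.bind_splits)

lemma prime_filter_predecessor_fun:
  obtains pred :: "'v set set \<Rightarrow> 'a \<times> 'v set set" where
    "\<And>F R. prime_filter_on G F \<Longrightarrow> R \<in> F \<Longrightarrow> regular G R \<Longrightarrow>
      prime_filter_on G (snd (pred F)) \<and> F = pullback G (fst (pred F)) (snd (pred F)) \<and>
      rw G [fst (pred F)] \<in> snd (pred F)"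
proof -
  have "\<exists>p. (\<exists>R\<in>F. regular G R) \<and> prime_filter_on G F \<longrightarrow>
      prime_filter_on G (snd p) \<and> F = pullback G (fst p) (snd p) \<and> rw G [fst p] \<in> snd p" for F
  proof (cases "(\<exists>R\<in>F. regular G R) \<and> prime_filter_on G F")
    case True
    then obtain a F' where "prime_filter_on G F'" "F = pullback G a F'" "rw G [a] \<in> F'"
      using prime_filter_predecessor by blast
    then show ?thesis by (intro exI[of _ "(a, F')"]) simp
  qed auto
  then show ?thesis using that by metis
qed

text \<open>Starting from a prime filter, keep choosing predecessors as long as the current filter
  has a regular member; the chain stops exactly at the first filter without one.\<close>
lemma admissible_state_exists:
  assumes "C \<in> accs G" "C \<noteq> {}"
  obtains x where "admissible G x" "C \<in> sfilter x 0"
proof -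
  obtain F0 where F0: "prime_filter_on G F0" "C \<in> F0"
    using prime_filter_exists[of "{C}"] assms by auto
  obtain pred where pred: "\<And>F R. prime_filter_on G F \<Longrightarrow> R \<in> F \<Longrightarrow> regular G R \<Longrightarrow>
      prime_filter_on G (snd (pred F)) \<and> F = pullback G (fst (pred F)) (snd (pred F)) \<and>
      rw G [fst (pred F)] \<in> snd (pred F)"
    using prime_filter_predecessor_fun by blast
  define has_regular where "has_regular F \<longleftrightarrow> (\<exists>R\<in>F. regular G R)" for F :: "'v set set"
  define Fs where "Fs n = ((\<lambda>F. if has_regular F then snd (pred F) else F) ^^ n) F0" for n
  have Fs_0: "Fs 0 = F0" and Fs_Suc: "Fs (Suc n) = (if has_regular (Fs n) then snd (pred (Fs n)) else Fs n)"
    for n unfolding Fs_def by simp_all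
  have prime: "prime_filter_on G (Fs n)" for n
    by (induction n) (use F0 pred in \<open>auto simp: Fs_0 Fs_Suc has_regular_def\<close>)
  define L where "L = (if \<forall>n. has_regular (Fs n) then \<infinity> else enat (LEAST n. \<not> has_regular (Fs n)))"
  have regular_below: "has_regular (Fs n)" if "enat n < L" for n
  proof (cases "\<forall>n. has_regular (Fs n)")
    case False
    then have "L = enat (LEAST n. \<not> has_regular (Fs n))"
      unfolding L_def by (simp only: if_False)
    then have "n < (LEAST n. \<not> has_regular (Fs n))" using that by simp
    then show ?thesis by (rule not_less_Least[THEN notnotD])
  qed simp
  have no_regular_at_end: "\<not> has_regular (Fs m)" if "L = enat m" for m
  proof -
    have "\<exists>n. \<not> has_regular (Fs n)" and "m = (LEAST n. \<not> has_regular (Fs n))"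
      using that unfolding L_def by (auto split: if_splits)
    then show ?thesis by (metis LeastI_ex)
  qed
  have "admissible G (State L (\<lambda>n. fst (pred (Fs n))) Fs)"
    unfolding admissible_def state.sel
  proof (intro conjI allI impI)
    fix n assume "enat n < L"
    then have "has_regular (Fs n)" by (rule regular_below)
    with pred[OF prime] show "Fs n = pullback G (fst (pred (Fs n))) (Fs (Suc n))"
        "rw G [fst (pred (Fs n))] \<in> Fs (Suc n)"
      unfolding has_regular_def Fs_Suc by auto
  next
    fix m assume "L = enat m"
    then show "\<forall>A\<in>Fs m. \<not> regular G A"
      using no_regular_at_end unfolding has_regular_def by simp
  qed (rule prime)
  then show ?thesis
    using that F0 Fs_0 by auto
qed

end

section \<open>The free algebra acting on states\<close>

definition fa_supp :: "('v, 'a, 'r::comm_ring_1) fa \<Rightarrow> ('v, 'a) gen list set" where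
  "fa_supp f = {u. f u \<noteq> 0}"

text \<open>The free algebra acts on finitely supported functions on states, a word \<open>u\<close> sending
  the point mass at \<open>x\<close> to the point mass at \<open>word_act G u x\<close> (or to \<open>0\<close>);
  \<open>state_coeff G x y f\<close> is the \<open>(y, x)\<close> matrix entry of the action of \<open>f\<close>.\<close>
definition state_coeff ::
  "('v, 'e, 'a) lspace \<Rightarrow> ('a, 'v) state \<Rightarrow> ('a, 'v) state \<Rightarrow> ('v, 'a, 'r::comm_ring_1) fa \<Rightarrow> 'r" where
  "state_coeff G x y f = (\<Sum>u\<in>fa_supp f. f u * of_bool (word_act G u x = Some y))"

definition vanishes_on_states :: "('v, 'e, 'a) lspace \<Rightarrow> ('v, 'a, 'r::comm_ring_1) fa \<Rightarrow> bool" where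
  "vanishes_on_states G f \<longleftrightarrow>
     finite (fa_supp f) \<and> (\<forall>x y. admissible G x \<longrightarrow> state_coeff G x y f = 0)"

lemma state_coeff_eq_sum:
  assumes "finite U" "fa_supp f \<subseteq> U"
  shows "state_coeff G x y f = (\<Sum>u\<in>U. f u * of_bool (word_act G u x = Some y))"
  unfolding state_coeff_def
  by (rule sum.mono_neutral_left[OF assms]) (auto simp: fa_supp_def)

lemma fa_supp_mono: "fa_supp (mono c u) \<subseteq> {u}"
  unfolding fa_supp_def mono_def by auto

lemma finite_fa_supp_mono [simp]: "finite (fa_supp (mono c u))"
  using fa_supp_mono finite_subset by blast

lemma fa_supp_add: "fa_supp (fa_add f g) \<subseteq> fa_supp f \<union> fa_supp g"
  unfolding fa_supp_def fa_add_def by auto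

lemma fa_supp_sub: "fa_supp (fa_sub f g) \<subseteq> fa_supp f \<union> fa_supp g"
  unfolding fa_supp_def fa_sub_def by auto

lemma fa_supp_sum: "fa_supp (fa_sum F I) \<subseteq> (\<Union>i\<in>I. fa_supp (F i))"
proof
  fix u assume "u \<in> fa_supp (fa_sum F I)"
  then have "(\<Sum>i\<in>I. F i u) \<noteq> 0" unfolding fa_supp_def fa_sum_def by simp
  then obtain i where "i \<in> I" "F i u \<noteq> 0" by (meson sum.neutral)
  then show "u \<in> (\<Union>i\<in>I. fa_supp (F i))" unfolding fa_supp_def by auto
qed

lemma finite_fa_supp_add:
  "finite (fa_supp f) \<Longrightarrow> finite (fa_supp g) \<Longrightarrow> finite (fa_supp (fa_add f g))"
  using fa_supp_add finite_subset by blast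

lemma finite_fa_supp_sub:
  "finite (fa_supp f) \<Longrightarrow> finite (fa_supp g) \<Longrightarrow> finite (fa_supp (fa_sub f g))"
  using fa_supp_sub finite_subset by blast

lemma finite_fa_supp_sum:
  "finite I \<Longrightarrow> (\<And>i. i \<in> I \<Longrightarrow> finite (fa_supp (F i))) \<Longrightarrow> finite (fa_supp (fa_sum F I))"
  using fa_supp_sum finite_subset by (metis finite_UN_I)

lemma state_coeff_mono: "state_coeff G x y (mono c u) = c * of_bool (word_act G u x = Some y)"
proof -
  have "state_coeff G x y (mono c u) = (\<Sum>w\<in>{u}. mono c u w * of_bool (word_act G w x = Some y))"
    by (rule state_coeff_eq_sum) (simp_all add: fa_supp_mono)
  then show ?thesis by (simp add: mono_def)
qed

lemma state_coeff_add:
  assumes "finite (fa_supp f)" "finite (fa_supp g)"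
  shows "state_coeff G x y (fa_add f g) = state_coeff G x y f + state_coeff G x y g"
proof -
  let ?U = "fa_supp f \<union> fa_supp g"
  have "state_coeff G x y (fa_add f g) = (\<Sum>u\<in>?U. fa_add f g u * of_bool (word_act G u x = Some y))"
    by (rule state_coeff_eq_sum) (use assms fa_supp_add in auto)
  also have "\<dots> = (\<Sum>u\<in>?U. f u * of_bool (word_act G u x = Some y)) +
      (\<Sum>u\<in>?U. g u * of_bool (word_act G u x = Some y))"
    unfolding fa_add_def by (simp add: distrib_right sum.distrib del: sum_mult_of_bool_eq)
  also have "\<dots> = state_coeff G x y f + state_coeff G x y g"
    by (simp only: state_coeff_eq_sum[of ?U] finite_Un assms Un_upper1 Un_upper2)
  finally show ?thesis .
qed

lemma state_coeff_sub:
  assumes "finite (fa_supp f)" "finite (fa_supp g)"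
  shows "state_coeff G x y (fa_sub f g) = state_coeff G x y f - state_coeff G x y g"
proof -
  let ?U = "fa_supp f \<union> fa_supp g"
  have "state_coeff G x y (fa_sub f g) = (\<Sum>u\<in>?U. fa_sub f g u * of_bool (word_act G u x = Some y))"
    by (rule state_coeff_eq_sum) (use assms fa_supp_sub in auto)
  also have "\<dots> = (\<Sum>u\<in>?U. f u * of_bool (word_act G u x = Some y)) -
      (\<Sum>u\<in>?U. g u * of_bool (word_act G u x = Some y))"
    unfolding fa_sub_def by (simp add: left_diff_distrib sum_subtractf del: sum_mult_of_bool_eq)
  also have "\<dots> = state_coeff G x y f - state_coeff G x y g"
    by (simp only: state_coeff_eq_sum[of ?U] finite_Un assms Un_upper1 Un_upper2)
  finally show ?thesis .
qed

lemma state_coeff_sum: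
  assumes "finite I" "\<And>i. i \<in> I \<Longrightarrow> finite (fa_supp (F i))"
  shows "state_coeff G x y (fa_sum F I) = (\<Sum>i\<in>I. state_coeff G x y (F i))"
proof -
  let ?U = "\<Union>i\<in>I. fa_supp (F i)"
  have U: "finite ?U" using assms by blast
  have "state_coeff G x y (fa_sum F I) = (\<Sum>u\<in>?U. fa_sum F I u * of_bool (word_act G u x = Some y))"
    by (rule state_coeff_eq_sum[OF U fa_supp_sum])
  also have "\<dots> = (\<Sum>i\<in>I. \<Sum>u\<in>?U. F i u * of_bool (word_act G u x = Some y))"
    unfolding fa_sum_def by (simp add: sum_distrib_right sum.swap[of _ I] del: sum_mult_of_bool_eq)
  also have "\<dots> = (\<Sum>i\<in>I. state_coeff G x y (F i))"
    by (intro sum.cong refl state_coeff_eq_sum[OF U, symmetric]) auto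
  finally show ?thesis .
qed

lemma state_coeff_bind:
  fixes f :: "('v, 'a, 'r::comm_ring_1) fa"
  assumes "finite (fa_supp f)"
  shows "(\<Sum>z\<in>fa_supp f. f z * of_bool (Option.bind (word_act G z x) h = Some y)) =
         (\<Sum>y'\<in>(\<lambda>z. the (word_act G z x)) ` fa_supp f. state_coeff G x y' f * of_bool (h y' = Some y))"
    (is "_ = (\<Sum>y'\<in>?Y. _)")
proof -
  define Y where "Y = ?Y"
  have "finite Y" unfolding Y_def using assms by simp
  have split: "of_bool (Option.bind (word_act G z x) h = Some y) =
      (\<Sum>y'\<in>Y. of_bool (word_act G z x = Some y') * of_bool (h y' = Some y) :: 'r)"
    if "z \<in> fa_supp f" for z
  proof (cases "word_act G z x")
    case (Some y0)
    then have "y0 \<in> Y" using that unfolding Y_def by force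
    have "(\<Sum>y'\<in>Y. of_bool (word_act G z x = Some y') * of_bool (h y' = Some y)) =
        (\<Sum>y'\<in>Y. if y' = y0 then of_bool (h y0 = Some y) else (0::'r))"
      using Some by (intro sum.cong) auto
    also have "\<dots> = of_bool (h y0 = Some y)"
      by (simp only: sum.delta[OF \<open>finite Y\<close>] \<open>y0 \<in> Y\<close> if_True)
    finally show ?thesis using Some by simp
  qed simp
  have "(\<Sum>z\<in>fa_supp f. f z * of_bool (Option.bind (word_act G z x) h = Some y)) =
      (\<Sum>z\<in>fa_supp f. \<Sum>y'\<in>Y. f z * of_bool (word_act G z x = Some y') * of_bool (h y' = Some y))"
    using split by (simp add: sum_distrib_left mult.assoc del: sum_mult_of_bool_eq)
  also have "\<dots> = (\<Sum>y'\<in>Y. state_coeff G x y' f * of_bool (h y' = Some y))"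
    unfolding state_coeff_def
    by (subst sum.swap) (simp add: sum_distrib_right del: sum_mult_of_bool_eq)
  finally show ?thesis unfolding Y_def .
qed

lemma fa_smult_one [simp]: "fa_smult 1 f = f"
  by (simp add: fa_smult_def)

lemma fa_smult_mono: "fa_smult r (mono c u) = mono (r * c) u"
  unfolding fa_smult_def mono_def by auto

lemma fa_mult_mono_left:
  "fa_mult (mono c u) f w = (if take (length u) w = u then c * f (drop (length u) w) else 0)"
proof -
  have "fa_mult (mono c u) f w =
      (\<Sum>i\<in>{..length w}. if i = length u then
         (if take (length u) w = u then c * f (drop (length u) w) else 0) else 0)"
    unfolding fa_mult_def
  proof (rule sum.cong[OF refl])
    fix i assume "i \<in> {..length w}"
    then have "i \<noteq> length u \<Longrightarrow> take i w \<noteq> u" by auto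
    then show "mono c u (take i w) * f (drop i w) =
        (if i = length u then (if take (length u) w = u then c * f (drop (length u) w) else 0) else 0)"
      by (auto simp: mono_def)
  qed
  then show ?thesis by auto
qed

lemma fa_mult_mono_right:
  "fa_mult g (mono 1 v) w =
     (if drop (length w - length v) w = v then g (take (length w - length v) w) else 0)"
proof -
  have "fa_mult g (mono 1 v) w =
      (\<Sum>i\<in>{..length w}. if i = length w - length v then
         (if drop (length w - length v) w = v then g (take (length w - length v) w) else 0) else 0)"
    unfolding fa_mult_def
  proof (rule sum.cong[OF refl])
    fix i assume "i \<in> {..length w}"
    then have "i \<noteq> length w - length v \<Longrightarrow> drop i w \<noteq> v" by auto
    then show "g (take i w) * mono 1 v (drop i w) =
        (if i = length w - length v then
           (if drop (length w - length v) w = v then g (take (length w - length v) w) else 0) else 0)"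
      by (auto simp: mono_def)
  qed
  then show ?thesis by auto
qed

lemma fa_mult_mono_mono: "fa_mult (mono c u) (mono d v) = mono (c * d) (u @ v)"
proof
  fix w
  have "take (length u) w = u \<Longrightarrow> w = u @ drop (length u) w"
    by (metis append_take_drop_id)
  then show "fa_mult (mono c u) (mono d v) w = mono (c * d) (u @ v) w"
    unfolding fa_mult_mono_left by (auto simp: mono_def)
qed

lemma fa_mult_sandwich_apply: "fa_mult (fa_mult (mono c u) f) (mono 1 v) (u @ z @ v) = c * f z"
  unfolding fa_mult_mono_right fa_mult_mono_left by simp

lemma fa_supp_sandwich:
  "fa_supp (fa_mult (fa_mult (mono c u) f) (mono 1 v)) \<subseteq> (\<lambda>z. u @ z @ v) ` fa_supp f"
proof
  fix w assume "w \<in> fa_supp (fa_mult (fa_mult (mono c u) f) (mono 1 v))"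
  then have nonzero: "fa_mult (fa_mult (mono c u) f) (mono 1 v) w \<noteq> 0"
    unfolding fa_supp_def by simp
  define k where "k = length w - length v"
  define z where "z = drop (length u) (take k w)"
  have v: "drop k w = v" and u: "take (length u) (take k w) = u" and "f z \<noteq> 0"
    using nonzero unfolding fa_mult_mono_right fa_mult_mono_left k_def[symmetric] z_def[symmetric]
    by (auto split: if_splits)
  have "w = take k w @ v" using v by (metis append_take_drop_id)
  also have "take k w = u @ z" using u unfolding z_def by (metis append_take_drop_id)
  finally show "w \<in> (\<lambda>z. u @ z @ v) ` fa_supp f"
    using \<open>f z \<noteq> 0\<close> unfolding fa_supp_def by auto
qed

lemma state_coeff_sandwich:
  assumes "finite (fa_supp f)"
  shows "state_coeff G x y (fa_mult (fa_mult (mono c u) f) (mono 1 v)) =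
    c * (\<Sum>z\<in>fa_supp f. f z * of_bool (word_act G (u @ z @ v) x = Some y))"
proof -
  have "state_coeff G x y (fa_mult (fa_mult (mono c u) f) (mono 1 v)) =
      (\<Sum>w\<in>(\<lambda>z. u @ z @ v) ` fa_supp f.
         fa_mult (fa_mult (mono c u) f) (mono 1 v) w * of_bool (word_act G w x = Some y))"
    using assms by (intro state_coeff_eq_sum fa_supp_sandwich) simp
  also have "\<dots> = (\<Sum>z\<in>fa_supp f. c * f z * of_bool (word_act G (u @ z @ v) x = Some y))"
    by (subst sum.reindex) (auto simp: inj_on_def fa_mult_sandwich_apply)
  also have "\<dots> = c * (\<Sum>z\<in>fa_supp f. f z * of_bool (word_act G (u @ z @ v) x = Some y))"
    by (simp only: sum_distrib_left mult.assoc)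
  finally show ?thesis .
qed

lemma vanishes_on_states_diff:
  assumes "\<And>x. admissible G x \<Longrightarrow> word_act G u1 x = word_act G u2 x"
  shows "vanishes_on_states G (fa_sub (mono 1 u1) (mono 1 u2) :: ('v, 'a, 'r::comm_ring_1) fa)"
  unfolding vanishes_on_states_def
  using assms by (simp add: finite_fa_supp_sub state_coeff_sub state_coeff_mono)

lemma vanishes_on_states_mono:
  assumes "\<And>x. admissible G x \<Longrightarrow> word_act G u x = None"
  shows "vanishes_on_states G (mono 1 u :: ('v, 'a, 'r::comm_ring_1) fa)"
  unfolding vanishes_on_states_def using assms by (simp add: state_coeff_mono)

context normal_labelled_space
begin

lemma vanishes_on_states_sandwich:
  assumes f: "vanishes_on_states G f"
  shows "vanishes_on_states G (fa_mult (fa_mult (mono c u) f) (mono 1 v))"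
  unfolding vanishes_on_states_def
proof (intro conjI allI impI)
  have finite: "finite (fa_supp f)" using f unfolding vanishes_on_states_def by simp
  then show "finite (fa_supp (fa_mult (fa_mult (mono c u) f) (mono 1 v)))"
    by (intro finite_subset[OF fa_supp_sandwich] finite_imageI)
  fix x y assume x: "admissible G x"
  show "state_coeff G x y (fa_mult (fa_mult (mono c u) f) (mono 1 v)) = 0"
  proof (cases "word_act G v x")
    case None
    then show ?thesis
      unfolding state_coeff_sandwich[OF finite] by (simp add: word_act_append)
  next
    case (Some x')
    have "word_act G (u @ z @ v) x = Option.bind (word_act G z x') (word_act G u)" for z
      using Some by (simp add: word_act_append)
    then have "state_coeff G x y (fa_mult (fa_mult (mono c u) f) (mono 1 v)) =
        c * (\<Sum>z\<in>fa_supp f. f z * of_bool (Option.bind (word_act G z x') (word_act G u) = Some y))"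
      unfolding state_coeff_sandwich[OF finite] by simp
    also have "\<dots> = c * (\<Sum>y'\<in>(\<lambda>z. the (word_act G z x')) ` fa_supp f.
        state_coeff G x' y' f * of_bool (word_act G u y' = Some y))"
      unfolding state_coeff_bind[OF finite] ..
    also have "\<dots> = 0"
      using f admissible_word_act[OF x Some] unfolding vanishes_on_states_def by simp
    finally show ?thesis .
  qed
qed

section \<open>The defining relations vanish on states\<close>

lemma vanishes_rel_Int:
  assumes "A \<in> accs G" "B \<in> accs G"
  shows "vanishes_on_states G (fa_sub (pA (A \<inter> B)) (fa_mult (pA A) (pA B)) :: ('v, 'a, 'r::comm_ring_1) fa)"
proof -
  have "vanishes_on_states G (fa_sub (mono 1 [GP (A \<inter> B)]) (mono 1 [GP A, GP B]) :: ('v, 'a, 'r) fa)"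
    by (rule vanishes_on_states_diff)
      (use assms prime_filter_Int_iff[OF admissible_head_filter] in auto)
  then show ?thesis by (simp add: pA_def fa_mult_mono_mono)
qed

lemma vanishes_rel_Un:
  assumes "A \<in> accs G" "B \<in> accs G"
  shows "vanishes_on_states G
    (fa_sub (pA (A \<union> B)) (fa_sub (fa_add (pA A) (pA B)) (pA (A \<inter> B))) :: ('v, 'a, 'r::comm_ring_1) fa)"
  unfolding vanishes_on_states_def
proof (intro conjI allI impI)
  have finite: "finite (fa_supp (pA X :: ('v, 'a, 'r) fa))" for X
    by (simp add: pA_def)
  then show "finite (fa_supp
      (fa_sub (pA (A \<union> B)) (fa_sub (fa_add (pA A) (pA B)) (pA (A \<inter> B))) :: ('v, 'a, 'r) fa))"
    by (intro finite_fa_supp_sub finite_fa_supp_add)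
  fix x y assume x: "admissible G x"
  have Int: "A \<inter> B \<in> sfilter x 0 \<longleftrightarrow> A \<in> sfilter x 0 \<and> B \<in> sfilter x 0"
    and Un: "A \<union> B \<in> sfilter x 0 \<longleftrightarrow> A \<in> sfilter x 0 \<or> B \<in> sfilter x 0"
    using prime_filter_Int_iff prime_filter_Un_iff admissible_head_filter[OF x] assms by blast+
  show "state_coeff G x y
      (fa_sub (pA (A \<union> B)) (fa_sub (fa_add (pA A) (pA B)) (pA (A \<inter> B))) :: ('v, 'a, 'r) fa) = 0"
    using finite
    by (simp add: state_coeff_sub state_coeff_add finite_fa_supp_add finite_fa_supp_sub
        pA_def state_coeff_mono Int Un)
qed

lemma vanishes_rel_empty: "vanishes_on_states G (pA {} :: ('v, 'a, 'r::comm_ring_1) fa)"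
  unfolding pA_def
  by (rule vanishes_on_states_mono)
    (use filter_nonempty_member[OF prime_filter_filter[OF admissible_head_filter]] in fastforce)

lemma vanishes_rel_p_s:
  assumes "A \<in> accs G"
  shows "vanishes_on_states G
    (fa_sub (fa_mult (pA A) (sa a)) (fa_mult (sa a) (pA (rset G A [a]))) :: ('v, 'a, 'r::comm_ring_1) fa)"
proof -
  have "vanishes_on_states G (fa_sub (mono 1 [GP A, GS a]) (mono 1 [GS a, GP (rset G A [a])]) :: ('v, 'a, 'r) fa)"
    by (rule vanishes_on_states_diff) (use assms in \<open>simp add: pullback_def\<close>)
  then show ?thesis by (simp add: pA_def sa_def fa_mult_mono_mono)
qed

lemma vanishes_rel_s_star_p:
  assumes "A \<in> accs G"
  shows "vanishes_on_states G
    (fa_sub (fa_mult (sast a) (pA A)) (fa_mult (pA (rset G A [a])) (sast a)) :: ('v, 'a, 'r::comm_ring_1) fa)"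
proof -
  have "word_act G [GSt a, GP A] x = word_act G [GP (rset G A [a]), GSt a] x" if x: "admissible G x" for x
  proof (cases "0 < slen x \<and> slabel x 0 = a")
    case True
    then have "A \<in> sfilter x 0 \<longleftrightarrow> rset G A [a] \<in> sfilter x 1"
      using admissible_head_step[OF x] assms unfolding pullback_def by auto
    then show ?thesis using True by (simp add: state_tail_def)
  qed auto
  then have "vanishes_on_states G (fa_sub (mono 1 [GSt a, GP A]) (mono 1 [GP (rset G A [a]), GSt a]) :: ('v, 'a, 'r) fa)"
    by (rule vanishes_on_states_diff)
  then show ?thesis by (simp add: pA_def sast_def fa_mult_mono_mono)
qed

lemma vanishes_rel_s_star_s: "vanishes_on_states G (fa_sub (fa_mult (sast a) (sa a)) (pA (rw G [a])) :: ('v, 'a, 'r::comm_ring_1) fa)"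
proof -
  have "vanishes_on_states G (fa_sub (mono 1 [GSt a, GS a]) (mono 1 [GP (rw G [a])]) :: ('v, 'a, 'r) fa)"
    by (rule vanishes_on_states_diff) simp
  then show ?thesis by (simp add: pA_def sa_def sast_def fa_mult_mono_mono)
qed

lemma vanishes_rel_s_star_s_distinct:
  assumes "b \<noteq> a"
  shows "vanishes_on_states G (fa_mult (sast b) (sa a) :: ('v, 'a, 'r::comm_ring_1) fa)"
proof -
  have "vanishes_on_states G (mono 1 [GSt b, GS a] :: ('v, 'a, 'r) fa)"
    by (rule vanishes_on_states_mono) (use assms in simp)
  then show ?thesis by (simp add: sa_def sast_def fa_mult_mono_mono)
qed

lemma vanishes_rel_s_s_star_s:
  "vanishes_on_states G (fa_sub (fa_mult (fa_mult (sa a) (sast a)) (sa a)) (sa a) :: ('v, 'a, 'r::comm_ring_1) fa)"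
proof -
  have "vanishes_on_states G (fa_sub (mono 1 [GS a, GSt a, GS a]) (mono 1 [GS a]) :: ('v, 'a, 'r) fa)"
    by (rule vanishes_on_states_diff) simp
  then show ?thesis by (simp add: sa_def sast_def fa_mult_mono_mono)
qed

lemma vanishes_rel_s_star_s_s_star:
  "vanishes_on_states G (fa_sub (fa_mult (fa_mult (sast a) (sa a)) (sast a)) (sast a) :: ('v, 'a, 'r::comm_ring_1) fa)"
proof -
  have "word_act G [GSt a, GS a, GSt a] x = word_act G [GSt a] x" if "admissible G x" for x
  proof (cases "gen_act G (GSt a) x")
    case (Some y)
    then show ?thesis using gen_act_GSt_GS[OF that Some] by simp
  qed simp
  then have "vanishes_on_states G (fa_sub (mono 1 [GSt a, GS a, GSt a]) (mono 1 [GSt a]) :: ('v, 'a, 'r) fa)"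
    by (rule vanishes_on_states_diff)
  then show ?thesis by (simp add: sa_def sast_def fa_mult_mono_mono)
qed

lemma admissible_regular_head:
  assumes x: "admissible G x" and A: "A \<in> sfilter x 0" "regular G A"
  shows "0 < slen x" "slabel x 0 \<in> labout G A"
proof -
  show pos: "0 < slen x"
  proof (rule ccontr)
    assume "\<not> 0 < slen x"
    then have "slen x = enat 0" by (simp add: zero_enat_def[symmetric])
    then show False using x A unfolding admissible_def by blast
  qed
  have step: "rset G A [slabel x 0] \<in> sfilter x 1"
    using admissible_head_step[OF x pos] A(1) unfolding pullback_def by auto
  have "prime_filter_on G (sfilter x 1)"
    using admissible_head_filter[OF admissible_tail[OF x pos]] by (simp add: state_tail_def)
  then have "rset G A [slabel x 0] \<noteq> {}"
    using filter_nonempty_member[OF prime_filter_filter] step by blast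
  then show "slabel x 0 \<in> labout G A"
    unfolding labout_def by (simp add: alphabet_if_rset_single_nonempty)
qed

lemma word_act_s_p_s_star:
  assumes x: "admissible G x" and A: "A \<in> accs G"
  shows "word_act G [GS a, GP (rset G A [a]), GSt a] x =
    (if 0 < slen x \<and> slabel x 0 = a \<and> A \<in> sfilter x 0 then Some x else None)"
proof (cases "0 < slen x \<and> slabel x 0 = a")
  case True
  then have tail: "gen_act G (GSt a) x = Some (state_tail x)" by simp
  have "A \<in> sfilter x 0 \<longleftrightarrow> rset G A [a] \<in> sfilter (state_tail x) 0"
    using admissible_head_step[OF x] True A unfolding pullback_def by (auto simp: state_tail_def)
  then show ?thesis
    using True tail gen_act_GSt_GS[OF x tail] by (simp del: gen_act.simps(2,3))
qed auto

lemma sum_state_coeff_s_p_s_star: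
  assumes x: "admissible G x" and A: "A \<in> Breg G" "A \<in> accs G" and labels: "finite (labout G A)"
  shows "(\<Sum>a\<in>labout G A. state_coeff G x y (mono 1 [GS a, GP (rset G A [a]), GSt a] :: ('v, 'a, 'r::comm_ring_1) fa)) =
    of_bool (A \<in> sfilter x 0 \<and> x = y)"
proof (cases "A \<in> sfilter x 0 \<and> x = y")
  case True
  then have "regular G A"
    using A(1) filter_nonempty_member[OF prime_filter_filter[OF admissible_head_filter[OF x]]]
    unfolding Breg_def by auto
  then have "0 < slen x" "slabel x 0 \<in> labout G A"
    using admissible_regular_head[OF x] True by auto
  moreover have "A \<in> sfilter x 0" "y = x" using True by auto
  ultimately have "(\<Sum>a\<in>labout G A. state_coeff G x y (mono 1 [GS a, GP (rset G A [a]), GSt a] :: ('v, 'a, 'r) fa)) =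
      (\<Sum>a\<in>labout G A. if a = slabel x 0 then 1 else 0)"
    by (intro sum.cong) (simp_all add: state_coeff_mono word_act_s_p_s_star[OF x A(2)] del: word_act.simps)
  then show ?thesis
    using True labels \<open>slabel x 0 \<in> labout G A\<close> by auto
next
  case False
  then have "state_coeff G x y (mono 1 [GS a, GP (rset G A [a]), GSt a] :: ('v, 'a, 'r) fa) = 0" for a
    by (auto simp: state_coeff_mono word_act_s_p_s_star[OF x A(2)] simp del: word_act.simps)
  then show ?thesis using False by simp
qed

lemma vanishes_rel_regular:
  assumes A: "A \<in> Breg G" "A \<in> accs G"
  shows "vanishes_on_states G (fa_sub (pA A)
    (fa_sum (\<lambda>a. fa_mult (fa_mult (sa a) (pA (rset G A [a]))) (sast a)) (labout G A))
    :: ('v, 'a, 'r::comm_ring_1) fa)"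
proof -
  have labels: "finite (labout G A)"
    using A unfolding Breg_def regular_def labout_def by auto
  let ?F = "\<lambda>a. mono 1 [GS a, GP (rset G A [a]), GSt a] :: ('v, 'a, 'r) fa"
  have "vanishes_on_states G (fa_sub (mono 1 [GP A]) (fa_sum ?F (labout G A)))"
    unfolding vanishes_on_states_def
  proof (intro conjI allI impI)
    show "finite (fa_supp (fa_sub (mono 1 [GP A]) (fa_sum ?F (labout G A))))"
      by (intro finite_fa_supp_sub finite_fa_supp_sum labels) simp_all
    fix x y assume x: "admissible G x"
    have "state_coeff G x y (fa_sub (mono 1 [GP A]) (fa_sum ?F (labout G A))) =
        state_coeff G x y (mono 1 [GP A] :: ('v, 'a, 'r) fa) - (\<Sum>a\<in>labout G A. state_coeff G x y (?F a))"
      using labels by (simp add: state_coeff_sub state_coeff_sum finite_fa_supp_sum)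
    then show "state_coeff G x y (fa_sub (mono 1 [GP A]) (fa_sum ?F (labout G A))) = 0"
      unfolding sum_state_coeff_s_p_s_star[OF x A labels] by (auto simp: state_coeff_mono)
  qed
  then show ?thesis
    by (simp add: pA_def sa_def sast_def fa_mult_mono_mono)
qed

lemma rels_vanish: "\<rho> \<in> rels G \<Longrightarrow> vanishes_on_states G \<rho>"
  unfolding rels_def
  by (elim UnE CollectE exE conjE)
    (simp_all add: vanishes_rel_Int vanishes_rel_Un vanishes_rel_empty vanishes_rel_p_s
      vanishes_rel_s_star_p vanishes_rel_s_star_s vanishes_rel_s_star_s_distinct vanishes_rel_s_s_star_s
      vanishes_rel_s_star_s_s_star vanishes_rel_regular)

lemma lideal_vanishes: "f \<in> lideal G \<Longrightarrow> vanishes_on_states G f"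
proof (induction rule: lideal.induct)
  case zero
  then show ?case unfolding vanishes_on_states_def state_coeff_def fa_supp_def fa_zero_def by simp
next
  case (add f g)
  then show ?case
    unfolding vanishes_on_states_def by (simp add: finite_fa_supp_add state_coeff_add)
qed (simp_all add: rels_vanish vanishes_on_states_sandwich)

lemma state_coeff_zero_in_L:
  "zero_in_L G f \<Longrightarrow> admissible G x \<Longrightarrow> state_coeff G x y f = 0"
  using lideal_vanishes unfolding zero_in_L_def vanishes_on_states_def by blast

lemma state_coeff_smult_pA:
  "A \<in> sfilter x 0 \<Longrightarrow> state_coeff G x x (fa_smult r (pA A) :: ('v, 'a, 'r::comm_ring_1) fa) = r"
  by (simp add: pA_def fa_smult_mono state_coeff_mono)

lemma zero_in_L_smult_pA:
  assumes "A \<in> accs G" "zero_in_L G (fa_smult r (pA A) :: ('v, 'a, 'r::comm_ring_1) fa)"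
  shows "r = 0 \<or> A = {}"
proof (rule disjCI)
  assume "A \<noteq> {}"
  then obtain x where "admissible G x" "A \<in> sfilter x 0"
    using admissible_state_exists assms(1) by blast
  then show "r = 0"
    using state_coeff_zero_in_L[OF assms(2)] state_coeff_smult_pA by metis
qed

lemma zero_in_L_sum_disjoint_pA:
  fixes rs :: "nat \<Rightarrow> 'r::comm_ring_1"
  assumes As: "\<forall>i<n. As i \<in> accs G \<and> As i \<noteq> {}"
    and disjoint: "\<forall>i<n. \<forall>j<n. i \<noteq> j \<longrightarrow> As i \<inter> As j = {}"
    and zero: "zero_in_L G (fa_sum (\<lambda>i. fa_smult (rs i) (pA (As i))) {..<n} :: ('v, 'a, 'r) fa)"
    and i: "i < n"
  shows "rs i = 0"
proof -
  obtain x where x: "admissible G x" "As i \<in> sfilter x 0"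
    using admissible_state_exists As i by blast
  have F: "filter_on G (sfilter x 0)"
    using prime_filter_filter[OF admissible_head_filter[OF x(1)]] .
  have "As j \<notin> sfilter x 0" if "j < n" "j \<noteq> i" for j
  proof
    assume "As j \<in> sfilter x 0"
    then have "As j \<inter> As i \<in> sfilter x 0" using filter_Int[OF F _ x(2)] by blast
    then show False using disjoint that i filter_nonempty_member[OF F] by blast
  qed
  then have "state_coeff G x x (fa_smult (rs j) (pA (As j)) :: ('v, 'a, 'r) fa) =
      (if j = i then rs i else 0)" if "j < n" for j
    using that x(2) by (auto simp: pA_def fa_smult_mono state_coeff_mono)
  then have "state_coeff G x x (fa_sum (\<lambda>i. fa_smult (rs i) (pA (As i))) {..<n} :: ('v, 'a, 'r) fa) = rs i"
    using i by (simp add: state_coeff_sum pA_def fa_smult_mono)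
  then show ?thesis
    using state_coeff_zero_in_L[OF zero x(1)] by simp
qed

lemma word_act_map_GS_defined:
  assumes F: "prime_filter_on G (sfilter z 0)"
    and "\<alpha> \<in> words G" "C \<in> sfilter z 0" "C \<subseteq> rw G \<alpha>"
  obtains y where "word_act G (map GS \<alpha>) z = Some y"
proof (cases "\<alpha> = []")
  case False
  have "rw G \<alpha> \<in> sfilter z 0"
    using assms rw_accs[OF assms(2) False] filter_upward_closed[OF prime_filter_filter[OF F]] by blast
  then show ?thesis
    using word_act_map_GS[OF F assms(2) False] that by blast
qed (use that in simp)

lemma smult_sw_pA_swst_not_zero_in_L:
  fixes r :: "'r::comm_ring_1"
  assumes \<alpha>: "\<alpha> \<in> words G" and \<beta>: "\<beta> \<in> words G" and A: "A \<in> accs G"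
    and meet: "A \<inter> rw G \<alpha> \<inter> rw G \<beta> \<noteq> {}" and "r \<noteq> 0"
  shows "\<not> zero_in_L G (fa_smult r (fa_mult (fa_mult (sw \<alpha>) (pA A)) (swst \<beta>)))"
proof
  assume zero: "zero_in_L G (fa_smult r (fa_mult (fa_mult (sw \<alpha>) (pA A)) (swst \<beta>)))"
  have "A \<inter> rw G w \<in> accs G" if "w \<in> words G" for w
    using A accs_subset_verts accs_Int rw_accs[OF that]
    by (cases "w = []") (auto simp: rw_def Int_absorb2)
  then have "A \<inter> rw G \<alpha> \<inter> rw G \<beta> \<in> accs G"
    using accs_Int[of "A \<inter> rw G \<alpha>" "A \<inter> rw G \<beta>"] \<alpha> \<beta> by (simp add: Int_assoc Int_left_commute)
  then obtain z where z: "admissible G z" "A \<inter> rw G \<alpha> \<inter> rw G \<beta> \<in> sfilter z 0"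
    using admissible_state_exists meet by blast
  note F = admissible_head_filter[OF z(1)]
  have "A \<in> sfilter z 0"
    using filter_upward_closed[OF prime_filter_filter[OF F] z(2) A] by blast
  obtain y where y: "word_act G (map GS \<alpha>) z = Some y"
    using word_act_map_GS_defined[OF F \<alpha> z(2)] by blast
  obtain x where x: "word_act G (map GS \<beta>) z = Some x"
    using word_act_map_GS_defined[OF F \<beta> z(2)] by blast
  have "word_act G (map GS \<alpha> @ [GP A] @ rev (map GSt \<beta>)) x = Some y"
    using word_act_map_GSt[OF x] \<open>A \<in> sfilter z 0\<close> y by (simp add: word_act_append)
  then have "state_coeff G x y (fa_smult r (fa_mult (fa_mult (sw \<alpha>) (pA A)) (swst \<beta>))) = r"
    by (simp add: sw_def pA_def swst_def fa_mult_mono_mono fa_smult_mono state_coeff_mono)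
  then show False
    using state_coeff_zero_in_L[OF zero admissible_word_act[OF z(1) x]] \<open>r \<noteq> 0\<close> by simp
qed

end

theorem lemma4p5:
  fixes G :: "('v, 'e, 'a) lspace"
  assumes "normal_lspace G"
  shows "(\<forall>A \<in> accs G. A \<noteq> {} \<longrightarrow> \<not> zero_in_L G (pA A :: ('v, 'a, 'r::comm_ring_1) fa))
    \<and> (\<forall>(r::'r) A. A \<in> accs G \<longrightarrow> zero_in_L G (fa_smult r (pA A)) \<longrightarrow> r = 0 \<or> A = {})
    \<and> (\<forall>(n::nat) (As :: nat \<Rightarrow> 'v set) (rs :: nat \<Rightarrow> 'r).
          (\<forall>i<n. As i \<in> accs G \<and> As i \<noteq> {}) \<longrightarrow>
          (\<forall>i<n. \<forall>j<n. i \<noteq> j \<longrightarrow> As i \<inter> As j = {}) \<longrightarrow>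
          zero_in_L G (fa_sum (\<lambda>i. fa_smult (rs i) (pA (As i))) {..<n}) \<longrightarrow>
          (\<forall>i<n. rs i = 0))
    \<and> (\<forall>\<alpha> \<beta> A (r::'r). \<alpha> \<in> words G \<longrightarrow> \<beta> \<in> words G \<longrightarrow> A \<in> accs G \<longrightarrow>
          A \<inter> rw G \<alpha> \<inter> rw G \<beta> \<noteq> {} \<longrightarrow> r \<noteq> 0 \<longrightarrow>
          \<not> zero_in_L G (fa_smult r (fa_mult (fa_mult (sw \<alpha>) (pA A)) (swst \<beta>))))"
proof -
  interpret normal_labelled_space G by (rule normal_labelled_space.intro[OF assms])
  have pA_nonzero: "\<not> zero_in_L G (pA A :: ('v, 'a, 'r) fa)" if "A \<in> accs G" "A \<noteq> {}" for A
    using zero_in_L_smult_pA[of A "1::'r"] that by auto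
  show ?thesis
    by (intro conjI allI impI ballI)
      (simp_all add: pA_nonzero zero_in_L_smult_pA zero_in_L_sum_disjoint_pA smult_sw_pA_swst_not_zero_in_L)
qed

end
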